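(* Consider an agent-dependent SDP performance estimation problem for distributed optimization with $n\ge2$ agents in which all agents are equivalent, and let $(F,G)$ with $F=[f_1^T\dots f_n^T]$, $G=[G_{ij}]$ be any feasible solution. Define $f^A=\frac1n\sum_{i=1}^nf_i\in\mathbb{R}^q$, $G^A=\frac1n\sum_{i=1}^nG_{ii}\in\mathbb{R}^{p\times p}$, $G^C=\frac{1}{n(n-1)}\sum_{i=1}^n\sum_{j\ne i}G_{ij}\in\mathbb{R}^{p\times p}$, and let $F^s=[(f^A)^T\dots(f^A)^T]$ and $G^s\in\mathbb{R}^{np\times np}$ be the block matrix with all diagonal blocks equal to $G^A$ and all off-diagonal blocks equal to $G^C$. Then $(F^s,G^s)$ is feasible for the PEP and has the same objective value as $(F,G)$.
   Context: In the agent-dependent SDP PEP, each agent $i$ holds $p$ vector variables (iterates, consensus outputs, gradients, copies of common points such as $x^*$), gathered as columns of $P_i\in\mathbb{R}^{d\times p}$ in the same order for all agents, and $q$ function values in $f_i\in\mathbb{R}^q$; the variables are $F=[f_1^T\dots f_n^T]$ and $G=P^TP\succeq0$, $P=[P_1\dots P_n]$, $G_{ij}=P_i^TP_j$. The objective (performance criterion) and all constraints (algorithm, function-class interpolation, initial conditions, optimality condition $\frac1n\sum_i\nabla f_i(x^* )=0$, consensus constraints) are linear or linear-matrix-inequality constraints in $(F,G)$, plus $G\succeq0$. Agents $i,j$ are equivalent if for every feasible $(F,G)$, swapping the blocks of agents $i$ and $j$ in $F$ and in the block rows/columns of $G$ gives a feasible solution with the same objective value; "all agents equivalent" means every pair of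 agents is equivalent. *)

theory Defs
  imports Complex_Main
begin

text \<open>Agents are indexed by 0..<n, the p vector variables of each agent by 0..<p,
  the q function values of each agent by 0..<q.
  F a k = k-th entry of f_a; G (a,k) (b,l) = entry (k,l) of block G_ab = P_a^T P_b.\<close>

definition agidx :: "nat \<Rightarrow> nat \<Rightarrow> (nat \<times> nat) set" where
  "agidx n p = {..<n} \<times> {..<p}"

definition psd_on :: "'a set \<Rightarrow> ('a \<Rightarrow> 'a \<Rightarrow> real) \<Rightarrow> bool" where
  "psd_on I M \<longleftrightarrow> (\<forall>a\<in>I. \<forall>b\<in>I. M a b = M b a) \<and>
     (\<forall>x :: 'a \<Rightarrow> real. 0 \<le> (\<Sum>a\<in>I. \<Sum>b\<in>I. x a * M a b * x b))"

text \<open>Linear (in)equality constraints are the special case dim = 1 (equalities as two inequalities).\<close>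
record lmi =
  dim :: nat
  c0 :: "nat \<Rightarrow> nat \<Rightarrow> real"
  cF :: "nat \<Rightarrow> nat \<Rightarrow> nat \<Rightarrow> nat \<Rightarrow> real"
  cG :: "nat \<Rightarrow> nat \<Rightarrow> nat \<times> nat \<Rightarrow> nat \<times> nat \<Rightarrow> real"

definition lmi_val ::
  "nat \<Rightarrow> nat \<Rightarrow> nat \<Rightarrow> lmi \<Rightarrow> (nat \<Rightarrow> nat \<Rightarrow> real) \<Rightarrow> (nat \<times> nat \<Rightarrow> nat \<times> nat \<Rightarrow> real)
     \<Rightarrow> nat \<Rightarrow> nat \<Rightarrow> real" where
  "lmi_val n p q L F G a b =
     c0 L a b + (\<Sum>i<n. \<Sum>k<q. cF L a b i k * F i k)
     + (\<Sum>u\<in>agidx n p. \<Sum>v\<in>agidx n p. cG L a b u v * G u v)"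

definition pep_feasible ::
  "nat \<Rightarrow> nat \<Rightarrow> nat \<Rightarrow> lmi set \<Rightarrow> (nat \<Rightarrow> nat \<Rightarrow> real) \<Rightarrow> (nat \<times> nat \<Rightarrow> nat \<times> nat \<Rightarrow> real) \<Rightarrow> bool" where
  "pep_feasible n p q cons F G \<longleftrightarrow>
     psd_on (agidx n p) G \<and> (\<forall>L\<in>cons. psd_on {..<dim L} (lmi_val n p q L F G))"

definition pep_obj ::
  "nat \<Rightarrow> nat \<Rightarrow> nat \<Rightarrow> (nat \<Rightarrow> nat \<Rightarrow> real) \<Rightarrow> (nat \<times> nat \<Rightarrow> nat \<times> nat \<Rightarrow> real)
     \<Rightarrow> (nat \<Rightarrow> nat \<Rightarrow> real) \<Rightarrow> (nat \<times> nat \<Rightarrow> nat \<times> nat \<Rightarrow> real) \<Rightarrow> real" where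
  "pep_obj n p q oF oG F G =
     (\<Sum>i<n. \<Sum>k<q. oF i k * F i k) + (\<Sum>u\<in>agidx n p. \<Sum>v\<in>agidx n p. oG u v * G u v)"

definition agent_swap :: "nat \<Rightarrow> nat \<Rightarrow> nat \<Rightarrow> nat" where
  "agent_swap i j a = (if a = i then j else if a = j then i else a)"

definition swapF :: "nat \<Rightarrow> nat \<Rightarrow> (nat \<Rightarrow> nat \<Rightarrow> real) \<Rightarrow> (nat \<Rightarrow> nat \<Rightarrow> real)" where
  "swapF i j F = (\<lambda>a k. F (agent_swap i j a) k)"

definition swapG :: "nat \<Rightarrow> nat \<Rightarrow> (nat \<times> nat \<Rightarrow> nat \<times> nat \<Rightarrow> real) \<Rightarrow> (nat \<times> nat \<Rightarrow> nat \<times> nat \<Rightarrow> real)" where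
  "swapG i j G = (\<lambda>(a, k) (b, l). G (agent_swap i j a, k) (agent_swap i j b, l))"

definition all_agents_equivalent ::
  "nat \<Rightarrow> nat \<Rightarrow> nat \<Rightarrow> lmi set \<Rightarrow> (nat \<Rightarrow> nat \<Rightarrow> real) \<Rightarrow> (nat \<times> nat \<Rightarrow> nat \<times> nat \<Rightarrow> real) \<Rightarrow> bool" where
  "all_agents_equivalent n p q cons oF oG \<longleftrightarrow>
     (\<forall>i<n. \<forall>j<n. \<forall>F G. pep_feasible n p q cons F G \<longrightarrow>
        pep_feasible n p q cons (swapF i j F) (swapG i j G) \<and>
        pep_obj n p q oF oG (swapF i j F) (swapG i j G) = pep_obj n p q oF oG F G)"

definition fA :: "nat \<Rightarrow> (nat \<Rightarrow> nat \<Rightarrow> real) \<Rightarrow> nat \<Rightarrow> real" where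
  "fA n F k = (1 / real n) * (\<Sum>i<n. F i k)"

definition GA :: "nat \<Rightarrow> (nat \<times> nat \<Rightarrow> nat \<times> nat \<Rightarrow> real) \<Rightarrow> nat \<Rightarrow> nat \<Rightarrow> real" where
  "GA n G k l = (1 / real n) * (\<Sum>i<n. G (i, k) (i, l))"

definition GC :: "nat \<Rightarrow> (nat \<times> nat \<Rightarrow> nat \<times> nat \<Rightarrow> real) \<Rightarrow> nat \<Rightarrow> nat \<Rightarrow> real" where
  "GC n G k l = (1 / (real n * (real n - 1))) * (\<Sum>i<n. \<Sum>j\<in>{..<n} - {i}. G (i, k) (j, l))"

definition Fs :: "nat \<Rightarrow> (nat \<Rightarrow> nat \<Rightarrow> real) \<Rightarrow> nat \<Rightarrow> nat \<Rightarrow> real" where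
  "Fs n F = (\<lambda>i k. fA n F k)"

definition Gs :: "nat \<Rightarrow> (nat \<times> nat \<Rightarrow> nat \<times> nat \<Rightarrow> real) \<Rightarrow> nat \<times> nat \<Rightarrow> nat \<times> nat \<Rightarrow> real" where
  "Gs n G = (\<lambda>(i, k) (j, l). if i = j then GA n G k l else GC n G k l)"

end

theory Submission
  imports Defs "HOL-Combinatorics.Permutations"
begin

text \<open>The feasible set of the PEP is convex (it is cut out by linear matrix inequalities and
  \<open>G \<succeq> 0\<close>) and the objective is linear.  Since all agents are equivalent, every permutation
  of the agents maps feasible solutions to feasible solutions of the same value, so the
  uniform average of the \<open>n!\<close> permuted copies of \<open>(F, G)\<close> is again feasible with the same
  value.  Averaging over all permutations sends the block of agent \<open>i\<close> to the mean of all
  blocks and the block \<open>(i, j)\<close>, \<open>i \<noteq> j\<close>, to the mean of all off-diagonal blocks, which is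
  exactly \<open>(F\<^sup>s, G\<^sup>s)\<close>.\<close>

lemma sum_sum_mult_sum_commute:
  fixes c :: "'a \<Rightarrow> 'b \<Rightarrow> real"
  shows "(\<Sum>i\<in>A. \<Sum>k\<in>B. c i k * (\<Sum>x\<in>X. w x * H x i k))
       = (\<Sum>x\<in>X. w x * (\<Sum>i\<in>A. \<Sum>k\<in>B. c i k * H x i k))"
proof -
  have "(\<Sum>i\<in>A. \<Sum>k\<in>B. c i k * (\<Sum>x\<in>X. w x * H x i k))
      = (\<Sum>i\<in>A. \<Sum>k\<in>B. \<Sum>x\<in>X. w x * (c i k * H x i k))"
    by (simp add: sum_distrib_left mult.left_commute)
  also have "\<dots> = (\<Sum>x\<in>X. \<Sum>i\<in>A. \<Sum>k\<in>B. w x * (c i k * H x i k))"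
    by (simp add: sum.swap[where B = X])
  finally show ?thesis
    by (simp add: sum_distrib_left)
qed

lemma psd_on_nonneg_combination:
  assumes "\<And>x. x \<in> X \<Longrightarrow> psd_on I (M x)" and "\<And>x. x \<in> X \<Longrightarrow> 0 \<le> w x"
  shows "psd_on I (\<lambda>a b. \<Sum>x\<in>X. w x * M x a b)"
  unfolding psd_on_def
proof (intro conjI ballI allI)
  fix a b assume "a \<in> I" "b \<in> I"
  then show "(\<Sum>x\<in>X. w x * M x a b) = (\<Sum>x\<in>X. w x * M x b a)"
    using assms(1) by (auto simp: psd_on_def intro!: sum.cong)
next
  fix y :: "_ \<Rightarrow> real"
  have "(\<Sum>a\<in>I. \<Sum>b\<in>I. y a * (\<Sum>x\<in>X. w x * M x a b) * y b)
      = (\<Sum>a\<in>I. \<Sum>b\<in>I. (y a * y b) * (\<Sum>x\<in>X. w x * M x a b))"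
    by (simp add: mult_ac)
  also have "\<dots> = (\<Sum>x\<in>X. w x * (\<Sum>a\<in>I. \<Sum>b\<in>I. (y a * y b) * M x a b))"
    by (rule sum_sum_mult_sum_commute)
  also have "\<dots> = (\<Sum>x\<in>X. w x * (\<Sum>a\<in>I. \<Sum>b\<in>I. y a * M x a b * y b))"
    by (simp add: mult_ac)
  also have "\<dots> \<ge> 0"
    using assms by (intro sum_nonneg, intro mult_nonneg_nonneg) (auto simp: psd_on_def)
  finally show "0 \<le> (\<Sum>a\<in>I. \<Sum>b\<in>I. y a * (\<Sum>x\<in>X. w x * M x a b) * y b)" .
qed

lemma lmi_val_convex_combination:
  assumes "(\<Sum>x\<in>X. w x) = 1"
  shows "lmi_val n p q L (\<lambda>i k. \<Sum>x\<in>X. w x * FF x i k) (\<lambda>u v. \<Sum>x\<in>X. w x * GG x u v) a b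
       = (\<Sum>x\<in>X. w x * lmi_val n p q L (FF x) (GG x) a b)"
proof -
  have "c0 L a b = (\<Sum>x\<in>X. w x * c0 L a b)"
    using assms by (simp flip: sum_distrib_right)
  then show ?thesis
    unfolding lmi_val_def sum_sum_mult_sum_commute
    by (simp only: sum.distrib distrib_left)
qed

lemma pep_obj_linear_combination:
  "pep_obj n p q oF oG (\<lambda>i k. \<Sum>x\<in>X. w x * FF x i k) (\<lambda>u v. \<Sum>x\<in>X. w x * GG x u v)
     = (\<Sum>x\<in>X. w x * pep_obj n p q oF oG (FF x) (GG x))"
  unfolding pep_obj_def sum_sum_mult_sum_commute
  by (simp only: sum.distrib distrib_left)

lemma pep_feasible_convex_combination:
  assumes "(\<Sum>x\<in>X. w x) = 1" and "\<And>x. x \<in> X \<Longrightarrow> 0 \<le> w x"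
    and "\<And>x. x \<in> X \<Longrightarrow> pep_feasible n p q cons (FF x) (GG x)"
  shows "pep_feasible n p q cons (\<lambda>i k. \<Sum>x\<in>X. w x * FF x i k) (\<lambda>u v. \<Sum>x\<in>X. w x * GG x u v)"
  unfolding pep_feasible_def lmi_val_convex_combination[OF assms(1)]
  using assms(2,3) by (auto simp: pep_feasible_def intro!: psd_on_nonneg_combination)

lemma pep_feasible_cong:
  assumes "\<And>i k. i < n \<Longrightarrow> k < q \<Longrightarrow> F i k = F' i k"
    and "\<And>u v. u \<in> agidx n p \<Longrightarrow> v \<in> agidx n p \<Longrightarrow> G u v = G' u v"
  shows "pep_feasible n p q cons F G \<longleftrightarrow> pep_feasible n p q cons F' G'"
proof -
  have "lmi_val n p q L F G = lmi_val n p q L F' G'" for L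
    using assms unfolding lmi_val_def by (intro ext) (auto intro!: sum.cong arg_cong2[where f = "(+)"])
  moreover have "psd_on (agidx n p) G \<longleftrightarrow> psd_on (agidx n p) G'"
    using assms unfolding psd_on_def by (auto intro!: sum.cong)
  ultimately show ?thesis
    unfolding pep_feasible_def by simp
qed

lemma pep_obj_cong:
  assumes "\<And>i k. i < n \<Longrightarrow> k < q \<Longrightarrow> F i k = F' i k"
    and "\<And>u v. u \<in> agidx n p \<Longrightarrow> v \<in> agidx n p \<Longrightarrow> G u v = G' u v"
  shows "pep_obj n p q oF oG F G = pep_obj n p q oF oG F' G'"
  using assms unfolding pep_obj_def by (auto intro!: sum.cong arg_cong2[where f = "(+)"])

definition permF :: "(nat \<Rightarrow> nat) \<Rightarrow> (nat \<Rightarrow> nat \<Rightarrow> real) \<Rightarrow> nat \<Rightarrow> nat \<Rightarrow> real" where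
  "permF s F = (\<lambda>a k. F (s a) k)"

definition permG ::
  "(nat \<Rightarrow> nat) \<Rightarrow> (nat \<times> nat \<Rightarrow> nat \<times> nat \<Rightarrow> real) \<Rightarrow> nat \<times> nat \<Rightarrow> nat \<times> nat \<Rightarrow> real" where
  "permG s G = (\<lambda>(a, k) (b, l). G (s a, k) (s b, l))"

lemma agent_swap_eq_transpose: "agent_swap = Transposition.transpose"
  by (simp add: fun_eq_iff agent_swap_def Transposition.transpose_def)

lemma permF_transpose_comp:
  "permF (Transposition.transpose a b \<circ> s) F = permF s (swapF a b F)"
  by (simp add: permF_def swapF_def agent_swap_eq_transpose)

lemma permG_transpose_comp:
  "permG (Transposition.transpose a b \<circ> s) G = permG s (swapG a b G)"
  by (simp add: permG_def swapG_def agent_swap_eq_transpose)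

lemma all_agents_equivalent_permutes:
  assumes "s permutes {..<n}" and "all_agents_equivalent n p q cons oF oG"
    and "pep_feasible n p q cons F G"
  shows "pep_feasible n p q cons (permF s F) (permG s G) \<and>
         pep_obj n p q oF oG (permF s F) (permG s G) = pep_obj n p q oF oG F G"
  using assms(1) finite_lessThan assms(3)
proof (induction arbitrary: F G rule: permutes_induct)
  case id
  then show ?case
    by (simp add: permF_def permG_def case_prod_beta' fun_eq_iff)
next
  case (swap a b s)
  then show ?case
    using assms(2) unfolding permF_transpose_comp permG_transpose_comp all_agents_equivalent_def
    by auto
qed

lemma permutes_map_pair:
  assumes "{i, j, a, b} \<subseteq> S" and "i \<noteq> j" and "a \<noteq> b"
  obtains t where "t permutes S" "t i = a" "t j = b"
proof -
  define t1 where "t1 = Transposition.transpose i a"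
  define t where "t = Transposition.transpose (t1 j) b \<circ> t1"
  have "t1 j \<in> S" "t1 j \<noteq> a"
    using assms unfolding t1_def Transposition.transpose_def by auto
  then have "t permutes S"
    using assms unfolding t_def t1_def by (intro permutes_compose permutes_swap_id) auto
  moreover have "t i = a" "t j = b"
    using \<open>t1 j \<noteq> a\<close> assms(3) unfolding t_def by (auto simp: t1_def Transposition.transpose_def)
  ultimately show thesis
    using that by blast
qed

lemma sum_permutations_apply:
  fixes h :: "'a \<Rightarrow> real"
  assumes "finite S" and "i \<in> S"
  shows "real (card S) * (\<Sum>s\<in>{s. s permutes S}. h (s i)) = fact (card S) * (\<Sum>a\<in>S. h a)"
proof -
  let ?P = "{s. s permutes S}"
  have orbit: "(\<Sum>s\<in>?P. h (s a)) = (\<Sum>s\<in>?P. h (s i))" if "a \<in> S" for a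
  proof -
    have "Transposition.transpose i a permutes S"
      using assms that by (intro permutes_swap_id) auto
    from sum_permutations_compose_right[OF this, of "\<lambda>s. h (s i)"]
    show ?thesis by simp
  qed
  have "real (card S) * (\<Sum>s\<in>?P. h (s i)) = (\<Sum>a\<in>S. \<Sum>s\<in>?P. h (s a))"
    using orbit by simp
  also have "\<dots> = (\<Sum>s\<in>?P. \<Sum>a\<in>S. h (s a))"
    by (rule sum.swap)
  also have "\<dots> = (\<Sum>s\<in>?P. \<Sum>a\<in>S. h a)"
  proof (rule sum.cong[OF refl])
    fix s assume "s \<in> ?P"
    then show "(\<Sum>a\<in>S. h (s a)) = (\<Sum>a\<in>S. h a)"
      using sum.permute[of s S h] by (simp add: o_def)
  qed
  finally show ?thesis
    using card_permutations[OF refl assms(1)] by simp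
qed

lemma sum_offdiag_permute:
  fixes g :: "'a \<Rightarrow> 'a \<Rightarrow> real"
  assumes "s permutes S" and "finite S"
  shows "(\<Sum>a\<in>S. \<Sum>b\<in>S - {a}. g (s a) (s b)) = (\<Sum>a\<in>S. \<Sum>b\<in>S - {a}. g a b)"
proof -
  have offdiag: "(\<Sum>a\<in>S. \<Sum>b\<in>S - {a}. f a b) = (\<Sum>a\<in>S. \<Sum>b\<in>S. f a b) - (\<Sum>a\<in>S. f a a)"
    for f :: "_ \<Rightarrow> _ \<Rightarrow> real"
    using assms(2) by (simp add: sum_diff1 sum_subtractf)
  have "(\<Sum>a\<in>S. \<Sum>b\<in>S. g (s a) (s b)) = (\<Sum>a\<in>S. \<Sum>b\<in>S. g a b)"
    using sum.permute[OF assms(1), of "\<lambda>a. \<Sum>b\<in>S. g a (s b)"]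
      sum.permute[OF assms(1), of "g _"] by (simp add: o_def)
  moreover have "(\<Sum>a\<in>S. g (s a) (s a)) = (\<Sum>a\<in>S. g a a)"
    using sum.permute[OF assms(1), of "\<lambda>a. g a a"] by (simp add: o_def)
  ultimately show ?thesis
    by (simp add: offdiag)
qed

lemma sum_permutations_apply_pair:
  fixes g :: "'a \<Rightarrow> 'a \<Rightarrow> real"
  assumes "finite S" and "i \<in> S" "j \<in> S" "i \<noteq> j"
  shows "real (card S) * (real (card S) - 1) * (\<Sum>s\<in>{s. s permutes S}. g (s i) (s j))
       = fact (card S) * (\<Sum>a\<in>S. \<Sum>b\<in>S - {a}. g a b)"
proof -
  let ?P = "{s. s permutes S}"
  let ?C = "\<lambda>a b. \<Sum>s\<in>?P. g (s a) (s b)"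
  have orbit: "?C a b = ?C i j" if ab: "a \<in> S" "b \<in> S - {a}" for a b
  proof -
    obtain t where "t permutes S" "t i = a" "t j = b"
      by (rule permutes_map_pair[of i j a b S]) (use assms ab in auto)
    with sum_permutations_compose_right[OF this(1), of "\<lambda>s. g (s i) (s j)"]
    show ?thesis by simp
  qed
  have "card (S - {a}) = card S - 1" if "a \<in> S" for a
    using assms(1) that by simp
  moreover have "card S > 0"
    using assms(1,2) card_gt_0_iff by blast
  ultimately have "real (card S) * (real (card S) - 1) * ?C i j = (\<Sum>a\<in>S. \<Sum>b\<in>S - {a}. ?C a b)"
    using orbit by (simp add: of_nat_diff)
  also have "\<dots> = (\<Sum>s\<in>?P. \<Sum>a\<in>S. \<Sum>b\<in>S - {a}. g (s a) (s b))"
    by (simp add: sum.swap[where B = ?P])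
  also have "\<dots> = (\<Sum>s\<in>?P. \<Sum>a\<in>S. \<Sum>b\<in>S - {a}. g a b)"
    using assms(1) by (intro sum.cong refl sum_offdiag_permute) auto
  finally show ?thesis
    using card_permutations[OF refl assms(1)] by simp
qed

lemma average_permF:
  assumes "i < n"
  shows "(\<Sum>s\<in>{s. s permutes {..<n}}. 1 / fact n * permF s F i k) = Fs n F i k"
proof -
  have "(\<Sum>s\<in>{s. s permutes {..<n}}. 1 / fact n * permF s F i k)
      = (\<Sum>s\<in>{s. s permutes {..<n}}. F (s i) k) / fact n"
    by (simp add: permF_def sum_divide_distrib)
  also have "\<dots> = (\<Sum>a<n. F a k) / real n"
    using sum_permutations_apply[of "{..<n}" i "\<lambda>a. F a k"] assms
    by (simp add: frac_eq_eq mult.commute)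
  finally show ?thesis
    by (simp add: Fs_def fA_def)
qed

lemma average_permG:
  assumes "u \<in> agidx n p" and "v \<in> agidx n p"
  shows "(\<Sum>s\<in>{s. s permutes {..<n}}. 1 / fact n * permG s G u v) = Gs n G u v"
proof -
  obtain a k b l where uv: "u = (a, k)" "v = (b, l)" and "a < n" "b < n"
    using assms unfolding agidx_def by auto
  have "(\<Sum>s\<in>{s. s permutes {..<n}}. 1 / fact n * permG s G u v)
      = (\<Sum>s\<in>{s. s permutes {..<n}}. G (s a, k) (s b, l)) / fact n"
    by (simp add: uv permG_def sum_divide_distrib)
  also have "\<dots> = Gs n G u v"
  proof (cases "a = b")
    case True
    have "(\<Sum>s\<in>{s. s permutes {..<n}}. G (s a, k) (s a, l)) / fact n
        = (\<Sum>c<n. G (c, k) (c, l)) / real n"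
      using sum_permutations_apply[of "{..<n}" a "\<lambda>c. G (c, k) (c, l)"] \<open>a < n\<close>
      by (simp add: frac_eq_eq mult.commute)
    then show ?thesis
      using True by (simp add: uv Gs_def GA_def)
  next
    case False
    then have "real n * (real n - 1) \<noteq> 0"
      using \<open>a < n\<close> \<open>b < n\<close> by auto
    then have "(\<Sum>s\<in>{s. s permutes {..<n}}. G (s a, k) (s b, l)) / fact n
        = (\<Sum>c<n. \<Sum>d\<in>{..<n} - {c}. G (c, k) (d, l)) / (real n * (real n - 1))"
      using sum_permutations_apply_pair[of "{..<n}" a b "\<lambda>c d. G (c, k) (d, l)"]
        False \<open>a < n\<close> \<open>b < n\<close>
      by (simp add: frac_eq_eq mult.commute)
    then show ?thesis
      using False by (simp add: uv Gs_def GC_def)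
  qed
  finally show ?thesis .
qed

theorem corollary1:
  fixes n p q :: nat and cons :: "lmi set"
    and oF :: "nat \<Rightarrow> nat \<Rightarrow> real" and oG :: "nat \<times> nat \<Rightarrow> nat \<times> nat \<Rightarrow> real"
    and F :: "nat \<Rightarrow> nat \<Rightarrow> real" and G :: "nat \<times> nat \<Rightarrow> nat \<times> nat \<Rightarrow> real"
  assumes "n \<ge> 2"
    and "all_agents_equivalent n p q cons oF oG"
    and "pep_feasible n p q cons F G"
  shows "pep_feasible n p q cons (Fs n F) (Gs n G) \<and>
         pep_obj n p q oF oG (Fs n F) (Gs n G) = pep_obj n p q oF oG F G"
proof -
  let ?P = "{s. s permutes {..<n}}"
  let ?w = "\<lambda>_. 1 / fact n :: real"
  have weights: "(\<Sum>s\<in>?P. ?w s) = 1"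
    using card_permutations[of "{..<n}" n] by simp
  have permuted: "pep_feasible n p q cons (permF s F) (permG s G)"
    "pep_obj n p q oF oG (permF s F) (permG s G) = pep_obj n p q oF oG F G" if "s \<in> ?P" for s
    using all_agents_equivalent_permutes that assms(2,3) by auto
  let ?F = "\<lambda>i k. \<Sum>s\<in>?P. ?w s * permF s F i k"
  let ?G = "\<lambda>u v. \<Sum>s\<in>?P. ?w s * permG s G u v"
  have "pep_obj n p q oF oG ?F ?G = (\<Sum>s\<in>?P. ?w s * pep_obj n p q oF oG F G)"
    unfolding pep_obj_linear_combination using permuted by (intro sum.cong refl) auto
  also have "\<dots> = pep_obj n p q oF oG F G"
    unfolding sum_distrib_right[symmetric] weights by simp
  finally have "pep_obj n p q oF oG ?F ?G = pep_obj n p q oF oG F G" .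
  moreover have "pep_feasible n p q cons ?F ?G"
    using permuted by (intro pep_feasible_convex_combination[OF weights]) auto
  ultimately show ?thesis
    using pep_feasible_cong[of n q ?F "Fs n F" p ?G "Gs n G"]
      pep_obj_cong[of n q ?F "Fs n F" p ?G "Gs n G"] average_permF average_permG
    by simp
qed

end
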